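(* Consider the Hecke operators $T_p$ of level $9$ acting on $\mathcal{M}(9)$, for primes $p\ne3$. Then: (a) $JT_pJ=T_p$ for all primes $p\neq3$; (b) $T_pT^{1/3}=T^{1/3}T_p$ if $p\equiv1\bmod3$; (c) $T_pT^{1/3}=T^{-1/3}T_p$ if $p\equiv2\bmod3$.
   Context: $\mathcal{M}(9)$ denotes a space of Maass cusp forms on $\Gamma_0(9)$ with fixed Laplace eigenvalue (real-analytic $\Gamma_0(9)$-invariant eigenfunctions of $-y^2(\partial_x^2+\partial_y^2)$ on the upper half-plane, vanishing at cusps, square-integrable). The Hecke operator of level $9$ is $T_n\varphi(z)=n^{-1/2}\sum_{ad=n,\,a>0,\,(a,9)=1}\sum_{b\bmod d}\varphi(\frac{az+b}{d})$. The operators $J$, $T^{1/3}$, $T^{-1/3}$ act by $(J\varphi)(z)=\varphi(-\bar z)$, $(T^{\pm1/3}\varphi)(z)=\varphi(z\pm\frac13)$ (these preserve $\mathcal{M}(9)$). *)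

theory Defs
  imports "HOL-Analysis.Analysis" "HOL-Computational_Algebra.Primes"
begin

definition uhp :: "complex set" where
  "uhp = {z. Im z > 0}"

definition moeb :: "int \<Rightarrow> int \<Rightarrow> int \<Rightarrow> int \<Rightarrow> complex \<Rightarrow> complex" where
  "moeb a b c d z = (of_int a * z + of_int b) / (of_int c * z + of_int d)"

definition dx :: "(complex \<Rightarrow> complex) \<Rightarrow> complex \<Rightarrow> complex" where
  "dx f z = vector_derivative (\<lambda>t::real. f (z + of_real t)) (at 0)"

definition dy :: "(complex \<Rightarrow> complex) \<Rightarrow> complex \<Rightarrow> complex" where
  "dy f z = vector_derivative (\<lambda>t::real. f (z + \<i> * of_real t)) (at 0)"

definition std_fd :: "complex set" where
  "std_fd = {z. Im z > 0 \<and> \<bar>Re z\<bar> \<le> 1/2 \<and> cmod z \<ge> 1}"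

text \<open>Maass cusp forms on Gamma_0(9) with Laplace eigenvalue lam
  (functions are regarded through their values on the upper half-plane).\<close>
definition maass_cusp_forms_9 :: "real \<Rightarrow> (complex \<Rightarrow> complex) set" where
  "maass_cusp_forms_9 lam = {phi.
     \<comment> \<open>C^2 in the real sense on the upper half-plane\<close>
     phi differentiable_on uhp \<and>
     dx phi differentiable_on uhp \<and> dy phi differentiable_on uhp \<and>
     continuous_on uhp (dx (dx phi)) \<and> continuous_on uhp (dx (dy phi)) \<and>
     continuous_on uhp (dy (dx phi)) \<and> continuous_on uhp (dy (dy phi)) \<and>
     \<comment> \<open>Laplace eigenfunction\<close>
     (\<forall>z\<in>uhp. - (complex_of_real ((Im z)\<^sup>2)) * (dx (dx phi) z + dy (dy phi) z)
                 = complex_of_real lam * phi z) \<and>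
     \<comment> \<open>Gamma_0(9)-invariance\<close>
     (\<forall>a b c d. a * d - b * c = 1 \<longrightarrow> 9 dvd c \<longrightarrow>
        (\<forall>z\<in>uhp. phi (moeb a b c d z) = phi z)) \<and>
     \<comment> \<open>vanishing at all cusps: zero constant term at every cusp
         (9 is a multiple of every cusp width of Gamma_0(9))\<close>
     (\<forall>a b c d. a * d - b * c = 1 \<longrightarrow>
        (\<forall>y>0. integral {0..9} (\<lambda>x. phi (moeb a b c d (Complex x y))) = 0)) \<and>
     \<comment> \<open>square integrable on the quotient of H by Gamma_0(9) (= on the finitely many SL2(Z)-translates
         of the standard fundamental domain), w.r.t. dx dy / y^2\<close>
     (\<forall>a b c d. a * d - b * c = 1 \<longrightarrow>
        (\<lambda>z. (cmod (phi (moeb a b c d z)))\<^sup>2 / (Im z)\<^sup>2) absolutely_integrable_on std_fd)}"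

definition hecke9 :: "nat \<Rightarrow> (complex \<Rightarrow> complex) \<Rightarrow> complex \<Rightarrow> complex" where
  "hecke9 n phi z = complex_of_real (1 / sqrt (real n)) *
     (\<Sum>a\<in>{a. a dvd n \<and> a > 0 \<and> coprime a 9}.
        \<Sum>b\<in>{0..<n div a}. phi ((of_nat a * z + of_nat b) / of_nat (n div a)))"

definition opJ :: "(complex \<Rightarrow> complex) \<Rightarrow> complex \<Rightarrow> complex" where
  "opJ phi z = phi (- cnj z)"

definition shift :: "real \<Rightarrow> (complex \<Rightarrow> complex) \<Rightarrow> complex \<Rightarrow> complex" where
  "shift s phi z = phi (z + of_real s)"

end

theory Submission imports Defs begin

text \<open>For a prime \<open>p \<noteq> 3\<close> the operator
  \<open>T\<^sub>p\<close> averages \<open>\<phi>\<close> over \<open>z \<mapsto> p z\<close> and \<open>z \<mapsto> (z + b)/p\<close>, \<open>0 \<le> b < p\<close>. Conjugating by \<open>J\<close>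
  replaces \<open>b\<close> by \<open>-b\<close>, and conjugating by a translation \<open>z \<mapsto> z + s\<close> turns \<open>T\<^sub>p\<close> into
  \<open>T\<^sub>p\<close> followed by the translation by \<open>t\<close> as soon as \<open>p s - t\<close> and \<open>p t - s\<close> are integers, because then
  \<open>b\<close> is merely shifted by an integer. Both changes permute \<open>b\<close> modulo \<open>p\<close>, which leaves the
  sum unchanged by periodicity. For \<open>s = 1/3\<close> one may take \<open>t = 1/3\<close> if \<open>p \<equiv> 1\<close> and
  \<open>t = -1/3\<close> if \<open>p \<equiv> 2 (mod 3)\<close>.\<close>

lemma sum_periodic_shift:
  fixes g :: "int \<Rightarrow> 'a::comm_monoid_add" and p :: nat
  assumes periodic: "\<And>k n. g (k + n * int p) = g k" and "p > 0"
  shows "(\<Sum>b\<in>{0..<p}. g (int b + m)) = (\<Sum>b\<in>{0..<p}. g (int b))"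
proof -
  define h where "h b = nat ((int b + m) mod int p)" for b
  have h_int: "int (h b) = (int b + m) mod int p" for b
    using \<open>p > 0\<close> by (simp add: h_def)
  have "g (int b + m) = g (int (h b))" for b
    using periodic[of "(int b + m) mod int p" "(int b + m) div int p"]
    by (simp add: h_int mod_div_mult_eq)
  moreover have "bij_betw h {0..<p} {0..<p}"
  proof -
    have "inj_on h {0..<p}"
    proof
      fix x y assume "x \<in> {0..<p}" "y \<in> {0..<p}" "h x = h y"
      then have "(int x + m) mod int p = (int y + m) mod int p" by (metis h_int)
      then have "int x mod int p = int y mod int p"
        using mod_add_cong[of "int x + m" "int p" "int y + m" "-m"] by simp
      with \<open>x \<in> {0..<p}\<close> \<open>y \<in> {0..<p}\<close> show "x = y" by simp
    qed
    moreover have "h ` {0..<p} \<subseteq> {0..<p}"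
      using \<open>p > 0\<close> by (auto simp: h_def nat_less_iff)
    ultimately show ?thesis by (simp add: bij_betw_def endo_inj_surj)
  qed
  ultimately show ?thesis
    using sum.reindex_bij_betw[of h "{0..<p}" "{0..<p}" "\<lambda>b. g (int b)"] by simp
qed

lemma sum_periodic_reflect:
  fixes g :: "int \<Rightarrow> 'a::comm_monoid_add" and p :: nat
  assumes "\<And>k n. g (k + n * int p) = g k" and "p > 0"
  shows "(\<Sum>b\<in>{0..<p}. g (- int b)) = (\<Sum>b\<in>{0..<p}. g (int b))"
proof -
  have "(\<Sum>b\<in>{0..<p}. g (- int b)) = (\<Sum>b\<in>{0..<p}. g (- int (p + 0 - Suc b)))"
    by (rule sum.atLeastLessThan_rev)
  also have "\<dots> = (\<Sum>b\<in>{0..<p}. g (int b + (1 - int p)))"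
    by (intro sum.cong) (simp_all add: of_nat_diff algebra_simps)
  also have "\<dots> = (\<Sum>b\<in>{0..<p}. g (int b))"
    using assms by (rule sum_periodic_shift)
  finally show ?thesis .
qed

lemma maass_cusp_forms_9_periodic:
  assumes "phi \<in> maass_cusp_forms_9 lam" and "Im w > 0"
  shows "phi (w + of_int n) = phi w"
proof -
  have "phi (moeb 1 n 0 1 w) = phi w"
    using assms unfolding maass_cusp_forms_9_def uhp_def by auto
  then show ?thesis by (simp add: moeb_def)
qed

lemma hecke9_prime:
  assumes "prime p" and "p \<noteq> 3"
  shows "hecke9 p phi z = complex_of_real (1 / sqrt (real p)) *
     ((\<Sum>b\<in>{0..<p}. phi ((z + of_nat b) / of_nat p)) + phi (of_nat p * z))"
proof -
  have "coprime p 3"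
    using assms by (simp add: primes_coprime)
  then have "coprime p 9"
    using coprime_power_right_iff[of p 3 2] by simp
  then have "{a. a dvd p \<and> a > 0 \<and> coprime a 9} = {1, p}"
    using \<open>prime p\<close> prime_nat_iff by (auto simp: prime_gt_0_nat)
  moreover have "p \<noteq> 1"
    using \<open>prime p\<close> by auto
  ultimately show ?thesis
    unfolding hecke9_def using \<open>prime p\<close> by (simp add: prime_gt_0_nat add.commute)
qed

lemma hecke_summand_periodic:
  assumes periodic: "\<And>w n. Im w > 0 \<Longrightarrow> phi (w + of_int n) = phi w"
    and "p > 0" and "Im w > 0"
  shows "phi ((w + of_int (k + n * int p)) / of_nat p) = phi ((w + of_int k) / of_nat p)"
proof -
  have "(w + of_int (k + n * int p)) / of_nat p = (w + of_int k) / of_nat p + of_int n"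
    using \<open>p > 0\<close> by (simp add: field_simps)
  moreover have "Im ((w + of_int k) / of_nat p) > 0"
    using \<open>p > 0\<close> \<open>Im w > 0\<close> by simp
  ultimately show ?thesis using periodic by simp
qed

lemma hecke9_opJ:
  assumes periodic: "\<And>w n. Im w > 0 \<Longrightarrow> phi (w + of_int n) = phi w"
    and "prime p" and "p \<noteq> 3" and "Im z > 0"
  shows "opJ (hecke9 p (opJ phi)) z = hecke9 p phi z"
proof -
  have "p > 0" using \<open>prime p\<close> prime_gt_0_nat by blast
  have reflect: "- cnj ((- cnj z + of_nat b) / of_nat p) = (z + of_int (- int b)) / of_nat p" for b
    by (simp add: complex_eq_iff diff_divide_distrib)
  have "(\<Sum>b\<in>{0..<p}. phi ((z + of_int (- int b)) / of_nat p))
      = (\<Sum>b\<in>{0..<p}. phi ((z + of_int (int b)) / of_nat p))"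
    using hecke_summand_periodic[OF periodic \<open>p > 0\<close> \<open>Im z > 0\<close>] \<open>p > 0\<close>
    by (rule sum_periodic_reflect)
  moreover have "- cnj (of_nat p * - cnj z) = of_nat p * z"
    by (simp add: complex_eq_iff)
  ultimately show ?thesis
    unfolding opJ_def hecke9_prime[OF \<open>prime p\<close> \<open>p \<noteq> 3\<close>] reflect by simp
qed

lemma hecke9_shift:
  assumes periodic: "\<And>w n. Im w > 0 \<Longrightarrow> phi (w + of_int n) = phi w"
    and "prime p" and "p \<noteq> 3" and "Im z > 0"
    and "real p * s - t = of_int m" and "real p * t - s = of_int m'"
  shows "hecke9 p (shift s phi) z = shift t (hecke9 p phi) z"
proof -
  have "p > 0" using \<open>prime p\<close> prime_gt_0_nat by blast
  define w where "w = z + of_real t"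
  have "Im w > 0" using \<open>Im z > 0\<close> by (simp add: w_def)
  have "(z + of_nat b) / of_nat p + of_real s = (w + of_int (int b + m)) / of_nat p" for b
  proof -
    have "of_nat p * of_real s = (of_real t + of_int m :: complex)"
      using \<open>real p * s - t = of_int m\<close>
      by (metis add.commute diff_eq_eq of_real_add of_real_mult of_real_of_int_eq of_real_of_nat_eq)
    moreover have "(z + of_nat b) / of_nat p + of_real s = (z + of_nat b + of_nat p * of_real s) / of_nat p"
      using \<open>p > 0\<close> by (simp add: field_simps)
    ultimately show ?thesis
      by (simp add: w_def algebra_simps)
  qed
  then have "(\<Sum>b\<in>{0..<p}. phi ((z + of_nat b) / of_nat p + of_real s))
      = (\<Sum>b\<in>{0..<p}. phi ((w + of_int (int b + m)) / of_nat p))"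
    by simp
  also have "\<dots> = (\<Sum>b\<in>{0..<p}. phi ((w + of_int (int b)) / of_nat p))"
    using hecke_summand_periodic[OF periodic \<open>p > 0\<close> \<open>Im w > 0\<close>] \<open>p > 0\<close>
    by (rule sum_periodic_shift)
  finally have sums: "(\<Sum>b\<in>{0..<p}. phi ((z + of_nat b) / of_nat p + of_real s))
      = (\<Sum>b\<in>{0..<p}. phi ((w + of_nat b) / of_nat p))"
    by simp
  have "of_nat p * w = (of_nat p * z + of_real s) + of_int m'"
  proof -
    have "of_nat p * of_real t = (of_real s + of_int m' :: complex)"
      using \<open>real p * t - s = of_int m'\<close>
      by (metis add.commute diff_eq_eq of_real_add of_real_mult of_real_of_int_eq of_real_of_nat_eq)
    then show ?thesis by (simp add: w_def algebra_simps)
  qed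
  moreover have "Im (of_nat p * z + of_real s) > 0"
    using \<open>Im z > 0\<close> \<open>p > 0\<close> by simp
  ultimately have "phi (of_nat p * w) = phi (of_nat p * z + of_real s)"
    using periodic by simp
  with sums show ?thesis
    unfolding hecke9_prime[OF \<open>prime p\<close> \<open>p \<noteq> 3\<close>] shift_def w_def by simp
qed

theorem lemma6p1:
  fixes lam :: real and phi :: "complex \<Rightarrow> complex" and p :: nat
  assumes "phi \<in> maass_cusp_forms_9 lam" and "prime p" and "p \<noteq> 3"
  shows "(\<forall>z\<in>uhp. opJ (hecke9 p (opJ phi)) z = hecke9 p phi z)
       \<and> (p mod 3 = 1 \<longrightarrow>
            (\<forall>z\<in>uhp. hecke9 p (shift (1/3) phi) z = shift (1/3) (hecke9 p phi) z))
       \<and> (p mod 3 = 2 \<longrightarrow>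
            (\<forall>z\<in>uhp. hecke9 p (shift (1/3) phi) z = shift (-1/3) (hecke9 p phi) z))"
proof -
  note periodic = maass_cusp_forms_9_periodic[OF assms(1)]
  have J: "opJ (hecke9 p (opJ phi)) z = hecke9 p phi z" if "z \<in> uhp" for z
    using hecke9_opJ[OF periodic assms(2,3)] that by (simp add: uhp_def)
  have p_split: "real p = 3 * real (p div 3) + real (p mod 3)"
    by (metis div_mult_mod_eq mult.commute of_nat_add of_nat_mult of_nat_numeral)
  have T1: "hecke9 p (shift (1/3) phi) z = shift (1/3) (hecke9 p phi) z"
    if "p mod 3 = 1" and "z \<in> uhp" for z
  proof -
    have k: "real p * (1/3) - 1/3 = of_int (int (p div 3))"
      using p_split \<open>p mod 3 = 1\<close> by (simp add: field_simps)
    from \<open>z \<in> uhp\<close> have "Im z > 0" by (simp add: uhp_def)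
    from hecke9_shift[OF periodic assms(2,3) this k k] show ?thesis .
  qed
  have T2: "hecke9 p (shift (1/3) phi) z = shift (-1/3) (hecke9 p phi) z"
    if "p mod 3 = 2" and "z \<in> uhp" for z
  proof -
    have "real p * (1/3) - (-1/3) = of_int (int (p div 3) + 1)"
      and "real p * (-1/3) - 1/3 = of_int (- int (p div 3) - 1)"
      using p_split \<open>p mod 3 = 2\<close> by (simp_all add: field_simps)
    moreover from \<open>z \<in> uhp\<close> have "Im z > 0" by (simp add: uhp_def)
    ultimately show ?thesis
      by (intro hecke9_shift[OF periodic assms(2,3)])
  qed
  show ?thesis using J T1 T2 by blast
qed

end
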